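(* Let $m\ge 2$, let $n_1,\dots,n_m\ge 4$ be even, and let $\mathcal{C}=\mathcal{C}(C_{n_1},\dots,C_{n_m})$ be the even chain cycle. Let $V_1=\{v^2_1,\dots,v^m_1\}$ and $V_2=V(\mathcal{C})\setminus V_1$ (so each vertex of $V_2$ has a unique name $v^i_j$ and lies in exactly one cycle $C_{n_i}$). Let $v^i_j,v^k_l\in V_2$ be distinct. (a) If $i=k$, then $v^i_j$ and $v^i_l$ are mutually maximally distant in $\mathcal{C}$ if and only if $d(v^i_j,v^i_l)=n_i/2$ (the diameter of $C_{n_i}$). (b) If $i\neq k$, then $v^i_j$ and $v^k_l$ are mutually maximally distant in $\mathcal{C}$ if and only if $d(v^i_j,v^k_l)$ equals the diameter of $\mathcal{C}$.
   Context: Let $C_{n_1},\dots,C_{n_m}$ be pairwise disjoint cycles, $V(C_{n_i})=\{v^i_1,\dots,v^i_{n_i}\}$ with $v^i_j$ adjacent to $v^i_{j+1}$ (indices mod $n_i$). The even chain cycle $\mathcal{C}(C_{n_1},\dots,C_{n_m})$ (all $n_i$ even) is obtained by identifying $v^i_{n_i/2+1}$ with $v^{i+1}_1$ for each $i=1,\dots,m-1$; the identified vertex carries both names. A vertex $u$ is maximally distant from $v$ if every neighbor $w$ of $u$ satisfies $d(v,w)\le d(u,v)$; $u,v$ are mutually maximally distant if each is maximally distant from the other. *)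

theory Defs
  imports Main
begin

definition edge_rel :: "('a \<Rightarrow> 'a \<Rightarrow> bool) \<Rightarrow> ('a \<times> 'a) set" where
  "edge_rel E = {(u, v). E u v}"

definition gdist :: "('a \<Rightarrow> 'a \<Rightarrow> bool) \<Rightarrow> 'a \<Rightarrow> 'a \<Rightarrow> nat" where
  "gdist E u v = (LEAST k. (u, v) \<in> (edge_rel E) ^^ k)"

definition max_distant :: "('a \<Rightarrow> 'a \<Rightarrow> bool) \<Rightarrow> 'a \<Rightarrow> 'a \<Rightarrow> bool" where
  "max_distant E u v = (\<forall>w. E u w \<longrightarrow> gdist E v w \<le> gdist E u v)"

definition mutually_max_distant :: "('a \<Rightarrow> 'a \<Rightarrow> bool) \<Rightarrow> 'a \<Rightarrow> 'a \<Rightarrow> bool" where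
  "mutually_max_distant E u v = (max_distant E u v \<and> max_distant E v u)"

definition gdiam :: "'a set \<Rightarrow> ('a \<Rightarrow> 'a \<Rightarrow> bool) \<Rightarrow> nat" where
  "gdiam V E = Max {gdist E u v | u v. u \<in> V \<and> v \<in> V}"

text \<open>Cycles are indexed by i \<in> {1..m} with lengths n i; the vertex named v^i_j
  (1 \<le> j \<le> n i) is represented by the pair (i,j), except that v^{i+1}_1 is
  identified with v^i_{n_i/2+1}, represented by the pair (i, n i div 2 + 1).\<close>

definition ecc_vx :: "(nat \<Rightarrow> nat) \<Rightarrow> nat \<Rightarrow> nat \<Rightarrow> nat \<times> nat" where
  "ecc_vx n i j = (if 2 \<le> i \<and> j = 1 then (i - 1, n (i - 1) div 2 + 1) else (i, j))"

definition ecc_V :: "(nat \<Rightarrow> nat) \<Rightarrow> nat \<Rightarrow> (nat \<times> nat) set" where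
  "ecc_V n m = {ecc_vx n i j | i j. 1 \<le> i \<and> i \<le> m \<and> 1 \<le> j \<and> j \<le> n i}"

definition ecc_adj :: "(nat \<Rightarrow> nat) \<Rightarrow> nat \<Rightarrow> nat \<times> nat \<Rightarrow> nat \<times> nat \<Rightarrow> bool" where
  "ecc_adj n m u v = (\<exists>i j. 1 \<le> i \<and> i \<le> m \<and> 1 \<le> j \<and> j \<le> n i \<and>
      ((u = ecc_vx n i j \<and> v = ecc_vx n i (j mod n i + 1)) \<or>
       (v = ecc_vx n i j \<and> u = ecc_vx n i (j mod n i + 1))))"

definition ecc_V1 :: "(nat \<Rightarrow> nat) \<Rightarrow> nat \<Rightarrow> (nat \<times> nat) set" where
  "ecc_V1 n m = {ecc_vx n i 1 | i. 2 \<le> i \<and> i \<le> m}"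

end

theory Submission
  imports Defs
begin

text \<open>The distance in the even chain cycle is an explicit formula: inside one cycle it is the
  cycle distance, and a shortest path from cycle \<open>p\<close> to a later cycle \<open>k\<close> leaves cycle \<open>p\<close> at the
  cut vertex \<open>v^p_{n_p/2+1}\<close>, crosses each intermediate cycle between its two antipodal cut
  vertices and enters cycle \<open>k\<close> at \<open>v^k_1\<close>. The formula is the graph distance because it changes
  by at most one along an edge and every vertex other than the target has a neighbour at which it
  decreases. A vertex of \<open>V_2\<close> has both neighbours on its own cycle, and only the first summand
  of the formula depends on its position there; hence \<open>v^i_j\<close> is maximally distant from \<open>v\<close>
  exactly when it is antipodal, on \<open>C_{n_i}\<close>, to the gate through which its shortest paths to \<open>v\<close>
  leave \<open>C_{n_i}\<close>. For two vertices of one cycle this says \<open>d = n_i/2\<close>. For vertices of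
  different cycles the antipodes of the gates lie in \<open>V_2\<close> only at the ends of the chain, which
  forces the pair \<open>v^1_1\<close>, \<open>v^m_{n_m/2+1}\<close> at distance \<open>\<Sum>p. n_p/2\<close>, the diameter.\<close>

section \<open>Graph distances\<close>

lemma gdist_eqI:
  assumes edges_in: "\<And>x y. E x y \<Longrightarrow> x \<in> V \<and> y \<in> V"
    and lipschitz: "\<And>x y z. E x y \<Longrightarrow> z \<in> V \<Longrightarrow> f x z \<le> f y z + 1"
    and eq_0_iff: "\<And>x z. x \<in> V \<Longrightarrow> z \<in> V \<Longrightarrow> f x z = 0 \<longleftrightarrow> x = z"
    and descent: "\<And>x z. x \<in> V \<Longrightarrow> z \<in> V \<Longrightarrow> f x z \<noteq> 0 \<Longrightarrow> \<exists>y. E x y \<and> f y z < f x z"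
    and "x \<in> V" "z \<in> V"
  shows "gdist E x z = f x z"
proof -
  let ?R = "edge_rel E"
  have walk_length: "f y z \<le> k" if "(y, z) \<in> ?R ^^ k" for k y
    using that
  proof (induction k arbitrary: y)
    case 0
    then show ?case using eq_0_iff[OF \<open>z \<in> V\<close> \<open>z \<in> V\<close>] by simp
  next
    case (Suc k)
    then obtain w where "(y, w) \<in> ?R" "(w, z) \<in> ?R ^^ k"
      using relpow_Suc_D2 by metis
    then have "E y w" "f w z \<le> k" using Suc.IH by (auto simp: edge_rel_def)
    then show ?case using lipschitz[of y w z] \<open>z \<in> V\<close> by simp
  qed
  have walk: "(y, z) \<in> ?R ^^ f y z" if "y \<in> V" for y
    using that
  proof (induction "f y z" arbitrary: y rule: less_induct)
    case less
    show ?case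
    proof (cases "f y z = 0")
      case True
      then have "y = z" using eq_0_iff less.prems \<open>z \<in> V\<close> by blast
      then show ?thesis using True by simp
    next
      case False
      then obtain w where w: "E y w" "f w z < f y z" using descent less.prems \<open>z \<in> V\<close> by blast
      then have "(w, z) \<in> ?R ^^ f w z" using less.hyps edges_in by blast
      moreover have "f y z = Suc (f w z)" using lipschitz[OF w(1) \<open>z \<in> V\<close>] w(2) by simp
      ultimately show ?thesis using w(1) relpow_Suc_I2[of y w ?R] by (simp add: edge_rel_def)
    qed
  qed
  show ?thesis
    unfolding gdist_def
  proof (rule Least_equality)
    show "(x, z) \<in> ?R ^^ f x z" using walk \<open>x \<in> V\<close> .
  qed (rule walk_length)
qed

lemma mutually_max_distant_commute:
  "mutually_max_distant E u v \<longleftrightarrow> mutually_max_distant E v u"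
  unfolding mutually_max_distant_def by blast

section \<open>Positions on a cycle\<close>

text \<open>The vertices of a cycle of length \<open>N\<close> are numbered \<open>1, \<dots>, N\<close>.\<close>

definition cyc_succ :: "nat \<Rightarrow> nat \<Rightarrow> nat" where
  "cyc_succ N j = (if j = N then 1 else j + 1)"

definition cyc_pred :: "nat \<Rightarrow> nat \<Rightarrow> nat" where
  "cyc_pred N j = (if j = 1 then N else j - 1)"

definition cyc_dist :: "nat \<Rightarrow> nat \<Rightarrow> nat \<Rightarrow> nat" where
  "cyc_dist N j t =
    (if j \<le> t then min (t - j) (N - (t - j)) else min (j - t) (N - (j - t)))"

definition cyc_antipode :: "nat \<Rightarrow> nat \<Rightarrow> nat" where
  "cyc_antipode h t = (if t \<le> h then t + h else t - h)"

lemma cyc_succ_eq_mod: "1 \<le> j \<Longrightarrow> j \<le> N \<Longrightarrow> cyc_succ N j = j mod N + 1"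
  unfolding cyc_succ_def by (auto simp: le_eq_less_or_eq)

lemma cyc_succ_bounds: "1 \<le> j \<Longrightarrow> j \<le> N \<Longrightarrow> 1 \<le> cyc_succ N j \<and> cyc_succ N j \<le> N"
  unfolding cyc_succ_def by auto

lemma cyc_pred_bounds: "1 \<le> j \<Longrightarrow> j \<le> N \<Longrightarrow> 1 \<le> cyc_pred N j \<and> cyc_pred N j \<le> N"
  unfolding cyc_pred_def by auto

lemma cyc_succ_eq_iff:
  "1 \<le> r \<Longrightarrow> r \<le> N \<Longrightarrow> 1 \<le> j \<Longrightarrow> j \<le> N \<Longrightarrow> cyc_succ N r = j \<longleftrightarrow> r = cyc_pred N j"
  unfolding cyc_succ_def cyc_pred_def by auto

lemma cyc_dist_self [simp]: "cyc_dist N j j = 0"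
  unfolding cyc_dist_def by simp

lemma cyc_dist_commute: "cyc_dist N j t = cyc_dist N t j"
  unfolding cyc_dist_def by auto

lemma cyc_dist_eq_0_iff:
  "1 \<le> j \<Longrightarrow> j \<le> N \<Longrightarrow> 1 \<le> t \<Longrightarrow> t \<le> N \<Longrightarrow> cyc_dist N j t = 0 \<longleftrightarrow> j = t"
  unfolding cyc_dist_def by (auto simp: min_def)

lemma cyc_dist_le_half: "cyc_dist N j t \<le> N div 2"
  unfolding cyc_dist_def by (auto simp: min_def)

lemma cyc_dist_succ_le:
  assumes "1 \<le> j" "j \<le> N" "1 \<le> t" "t \<le> N"
  shows "cyc_dist N (cyc_succ N j) t \<le> cyc_dist N j t + 1"
    and "cyc_dist N j t \<le> cyc_dist N (cyc_succ N j) t + 1"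
  using assms unfolding cyc_dist_def cyc_succ_def
  by (cases "j < t"; cases "j = N"; simp add: min_def; arith)+

lemma cyc_dist_offset: "cyc_dist N j (j + d) = min d (N - d)" "cyc_dist N (j + d) j = min d (N - d)"
  unfolding cyc_dist_def by auto

lemma cyc_dist_closer_neighbour:
  assumes "1 \<le> j" "j \<le> N" "1 \<le> t" "t \<le> N" "j \<noteq> t"
  shows "cyc_dist N (cyc_succ N j) t < cyc_dist N j t \<or> cyc_dist N (cyc_pred N j) t < cyc_dist N j t"
proof (cases "j < t")
  case True
  then obtain d where d: "t = j + d" "0 < d" by (metis less_imp_add_positive)
  then have dist: "cyc_dist N j t = min d (N - d)" by (simp add: cyc_dist_offset)
  consider "d \<le> N - d" | "N - d < d" "j = 1" | "N - d < d" "1 < j" using assms by linarith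
  then show ?thesis
  proof cases
    case 1
    then have "cyc_dist N (cyc_succ N j) t = min (d - 1) (N - (d - 1))"
      using d assms cyc_dist_offset(1)[of N "j + 1" "d - 1"] by (simp add: cyc_succ_def)
    then show ?thesis using 1 dist d assms by auto
  next
    case 2
    then have "cyc_dist N (cyc_pred N j) t = min (N - t) (N - (N - t))"
      using assms cyc_dist_offset(2)[of N t "N - t"] by (simp add: cyc_pred_def)
    then show ?thesis using 2 dist d assms by auto
  next
    case 3
    then have "cyc_dist N (cyc_pred N j) t = min (d + 1) (N - (d + 1))"
      using d assms cyc_dist_offset(1)[of N "j - 1" "d + 1"] by (simp add: cyc_pred_def)
    then show ?thesis using 3 dist d assms by auto
  qed
next
  case False
  then obtain d where d: "j = t + d" "0 < d" using assms(5) by (metis less_imp_add_positive nat_neq_iff)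
  then have dist: "cyc_dist N j t = min d (N - d)" by (simp add: cyc_dist_offset)
  consider "d \<le> N - d" | "N - d < d" "j = N" | "N - d < d" "j < N" using assms by linarith
  then show ?thesis
  proof cases
    case 1
    then have "cyc_dist N (cyc_pred N j) t = min (d - 1) (N - (d - 1))"
      using d assms cyc_dist_offset(2)[of N t "d - 1"] by (simp add: cyc_pred_def)
    then show ?thesis using 1 dist d assms by auto
  next
    case 2
    then have "cyc_dist N (cyc_succ N j) t = min (t - 1) (N - (t - 1))"
      using assms cyc_dist_offset(1)[of N 1 "t - 1"] by (simp add: cyc_succ_def)
    then show ?thesis using 2 dist d assms by auto
  next
    case 3
    then have "cyc_dist N (cyc_succ N j) t = min (d + 1) (N - (d + 1))"
      using d assms cyc_dist_offset(2)[of N t "d + 1"] by (simp add: cyc_succ_def)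
    then show ?thesis using 3 dist d assms by auto
  qed
qed
lemma cyc_dist_add_antipode:
  assumes "1 \<le> j" "j \<le> 2 * h" "1 \<le> t" "t \<le> 2 * h"
  shows "cyc_dist (2 * h) j t + cyc_dist (2 * h) j (cyc_antipode h t) = h"
  using assms unfolding cyc_dist_def cyc_antipode_def
  by (cases "j \<le> t"; cases "t \<le> h"; cases "j \<le> t + h"; cases "j + h \<le> t"; simp add: min_def; arith)

lemma cyc_antipode_bounds:
  "1 \<le> t \<Longrightarrow> t \<le> 2 * h \<Longrightarrow> 1 \<le> h \<Longrightarrow> 1 \<le> cyc_antipode h t \<and> cyc_antipode h t \<le> 2 * h"
  unfolding cyc_antipode_def by auto

lemma cyc_dist_eq_half_iff:
  assumes "1 \<le> j" "j \<le> 2 * h" "1 \<le> t" "t \<le> 2 * h" "1 \<le> h"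
  shows "cyc_dist (2 * h) j t = h \<longleftrightarrow> j = cyc_antipode h t"
  using cyc_dist_add_antipode[OF assms(1-4)] cyc_antipode_bounds[OF assms(3-5)]
    cyc_dist_eq_0_iff[of j "2 * h" "cyc_antipode h t"] assms(1,2)
  by auto

text \<open>On an even cycle, moving away from \<open>t\<close> means moving towards its antipode.\<close>

lemma cyc_dist_local_max_iff:
  assumes "1 \<le> j" "j \<le> 2 * h" "1 \<le> t" "t \<le> 2 * h" "1 \<le> h"
  shows "cyc_dist (2 * h) (cyc_succ (2 * h) j) t \<le> cyc_dist (2 * h) j t
      \<and> cyc_dist (2 * h) (cyc_pred (2 * h) j) t \<le> cyc_dist (2 * h) j t
    \<longleftrightarrow> cyc_dist (2 * h) j t = h"
proof
  assume no_farther: "cyc_dist (2 * h) (cyc_succ (2 * h) j) t \<le> cyc_dist (2 * h) j t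
      \<and> cyc_dist (2 * h) (cyc_pred (2 * h) j) t \<le> cyc_dist (2 * h) j t"
  let ?a = "cyc_antipode h t"
  have a: "1 \<le> ?a" "?a \<le> 2 * h" using cyc_antipode_bounds assms(3-5) by auto
  show "cyc_dist (2 * h) j t = h"
  proof (rule ccontr)
    assume "cyc_dist (2 * h) j t \<noteq> h"
    then have "j \<noteq> ?a" using cyc_dist_eq_half_iff assms by blast
    then obtain j' where j': "j' = cyc_succ (2 * h) j \<or> j' = cyc_pred (2 * h) j"
        "cyc_dist (2 * h) j' ?a < cyc_dist (2 * h) j ?a"
      using cyc_dist_closer_neighbour assms(1,2) a by blast
    then have "1 \<le> j'" "j' \<le> 2 * h" using cyc_succ_bounds cyc_pred_bounds assms(1,2) by blast+
    then show False
      using j' no_farther cyc_dist_add_antipode[of j h t] cyc_dist_add_antipode[of j' h t] assms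
      by auto
  qed
next
  assume "cyc_dist (2 * h) j t = h"
  then show "cyc_dist (2 * h) (cyc_succ (2 * h) j) t \<le> cyc_dist (2 * h) j t
      \<and> cyc_dist (2 * h) (cyc_pred (2 * h) j) t \<le> cyc_dist (2 * h) j t"
    using cyc_dist_le_half[of "2 * h"] by simp
qed

section \<open>Distances in the even chain cycle\<close>

lemma sum_split_at_two:
  fixes f :: "nat \<Rightarrow> 'a::comm_monoid_add"
  assumes "1 \<le> i" "i < k" "k \<le> m"
  shows "(\<Sum>q=1..m. f q)
    = (\<Sum>q=1..<i. f q) + f i + (\<Sum>q=Suc i..<k. f q) + f k + (\<Sum>q=Suc k..m. f q)"
proof -
  have "(\<Sum>q=i..<k. f q) + (\<Sum>q=k..<Suc m. f q) = (\<Sum>q=i..<Suc m. f q)"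
    "(\<Sum>q=1..<i. f q) + (\<Sum>q=i..<Suc m. f q) = (\<Sum>q=1..<Suc m. f q)"
    using assms by (intro sum.atLeastLessThan_concat; simp)+
  then show ?thesis
    using assms
    by (simp add: sum.atLeast_Suc_lessThan sum.atLeast_Suc_atMost atLeastLessThanSuc_atLeastAtMost
        add.assoc)
qed

locale even_chain_cycle =
  fixes n :: "nat \<Rightarrow> nat" and m :: nat
  assumes two_le_m: "2 \<le> m"
    and cycle_lengths: "\<forall>p\<in>{1..m}. even (n p) \<and> 4 \<le> n p"
begin

abbreviation V where "V \<equiv> ecc_V n m"
abbreviation V1 where "V1 \<equiv> ecc_V1 n m"
abbreviation adj where "adj \<equiv> ecc_adj n m"

definition half :: "nat \<Rightarrow> nat" where
  "half p = n p div 2"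

lemma cycle_length_eq:
  assumes "1 \<le> p" "p \<le> m"
  shows "n p = 2 * half p \<and> 2 \<le> half p"
proof -
  have "even (n p)" "4 \<le> n p" using cycle_lengths assms by auto
  then show ?thesis unfolding half_def by (auto elim!: evenE)
qed

lemma ecc_vx_cut_vertex: "2 \<le> p \<Longrightarrow> ecc_vx n p 1 = (p - 1, half (p - 1) + 1)"
  unfolding ecc_vx_def half_def by simp

lemma mem_V_iff: "(p, j) \<in> V \<longleftrightarrow> 1 \<le> p \<and> p \<le> m \<and> 1 \<le> j \<and> j \<le> n p \<and> \<not> (2 \<le> p \<and> j = 1)"
proof
  assume "(p, j) \<in> V"
  then obtain p' j' where "(p, j) = ecc_vx n p' j'" "1 \<le> p'" "p' \<le> m" "1 \<le> j'" "j' \<le> n p'"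
    unfolding ecc_V_def by blast
  then show "1 \<le> p \<and> p \<le> m \<and> 1 \<le> j \<and> j \<le> n p \<and> \<not> (2 \<le> p \<and> j = 1)"
  proof (cases "2 \<le> p' \<and> j' = 1")
    case True
    then have "(p, j) = (p' - 1, half (p' - 1) + 1)"
      using \<open>(p, j) = ecc_vx n p' j'\<close> ecc_vx_cut_vertex by simp
    moreover have "n (p' - 1) = 2 * half (p' - 1) \<and> 2 \<le> half (p' - 1)"
      using True \<open>p' \<le> m\<close> by (intro cycle_length_eq) auto
    ultimately show ?thesis using True \<open>p' \<le> m\<close> by auto
  qed (auto simp: ecc_vx_def)
next
  assume *: "1 \<le> p \<and> p \<le> m \<and> 1 \<le> j \<and> j \<le> n p \<and> \<not> (2 \<le> p \<and> j = 1)"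
  then have "(p, j) = ecc_vx n p j" by (auto simp: ecc_vx_def)
  then show "(p, j) \<in> V" unfolding ecc_V_def using * by blast
qed

lemma ecc_vx_mem_V: "1 \<le> p \<Longrightarrow> p \<le> m \<Longrightarrow> 1 \<le> j \<Longrightarrow> j \<le> n p \<Longrightarrow> ecc_vx n p j \<in> V"
  unfolding ecc_V_def by blast

lemma ecc_vx_canonical: "(p, j) \<in> V \<Longrightarrow> ecc_vx n p j = (p, j)"
  by (auto simp: mem_V_iff ecc_vx_def)

lemma ecc_vx_V2:
  assumes "1 \<le> p" "p \<le> m" "1 \<le> j" "j \<le> n p" "ecc_vx n p j \<notin> V1"
  shows "ecc_vx n p j = (p, j)" "(p, j) \<in> V - V1"
proof -
  have "\<not> (2 \<le> p \<and> j = 1)"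
    using assms unfolding ecc_V1_def by blast
  then show "ecc_vx n p j = (p, j)" by (auto simp: ecc_vx_def)
  then show "(p, j) \<in> V - V1" using assms ecc_vx_mem_V[of p j] by simp
qed

lemma cut_vertex_mem_V1:
  assumes "1 \<le> p" "p < m"
  shows "(p, half p + 1) \<in> V1"
proof -
  have "ecc_vx n (Suc p) 1 = (p, half p + 1)" "2 \<le> Suc p" "Suc p \<le> m"
    using ecc_vx_cut_vertex[of "Suc p"] assms by auto
  then show ?thesis unfolding ecc_V1_def by (intro CollectI exI[of _ "Suc p"]) simp
qed

lemma cyc_dist_exit_eq_half_iff:
  assumes "1 \<le> p" "p \<le> m" "1 \<le> j" "j \<le> n p"
  shows "cyc_dist (n p) j (half p + 1) = half p \<longleftrightarrow> j = 1"
proof -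
  have "n p = 2 * half p" "2 \<le> half p" using cycle_length_eq assms(1,2) by auto
  then show ?thesis using cyc_dist_eq_half_iff[of j "half p" "half p + 1"] assms(3,4)
    by (simp add: cyc_antipode_def)
qed

lemma cyc_dist_entry_eq_half_iff:
  assumes "1 \<le> p" "p \<le> m" "1 \<le> j" "j \<le> n p"
  shows "cyc_dist (n p) j 1 = half p \<longleftrightarrow> j = half p + 1"
proof -
  have "n p = 2 * half p" "2 \<le> half p" using cycle_length_eq assms(1,2) by auto
  then show ?thesis using cyc_dist_eq_half_iff[of j "half p" 1] assms(3,4)
    by (simp add: cyc_antipode_def)
qed

lemma cyc_dist_entry_exit:
  assumes "1 \<le> p" "p \<le> m"
  shows "cyc_dist (n p) 1 (half p + 1) = half p"
proof -
  have "1 \<le> n p" using cycle_length_eq[OF assms] by linarith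
  then show ?thesis using cyc_dist_exit_eq_half_iff[OF assms le_refl] by blast
qed

text \<open>Cycle \<open>p\<close> is entered at position \<open>1\<close> from cycle \<open>p - 1\<close> and left at position
  \<open>half p + 1\<close> towards cycle \<open>p + 1\<close>.\<close>

fun chain_dist :: "nat \<times> nat \<Rightarrow> nat \<times> nat \<Rightarrow> nat" where
  "chain_dist (p, j) (k, l) =
    (if p = k then cyc_dist (n p) j l
     else if p < k then cyc_dist (n p) j (half p + 1) + (\<Sum>q=Suc p..<k. half q) + cyc_dist (n k) 1 l
     else cyc_dist (n k) l (half k + 1) + (\<Sum>q=Suc k..<p. half q) + cyc_dist (n p) 1 j)"

lemma chain_dist_commute: "chain_dist x y = chain_dist y x"
  by (cases x; cases y) (auto simp: cyc_dist_commute)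

text \<open>The position at which shortest paths from cycle \<open>p\<close> to \<open>v^k_l\<close> leave cycle \<open>p\<close>.\<close>

definition gate :: "nat \<Rightarrow> nat \<Rightarrow> nat \<Rightarrow> nat" where
  "gate p k l = (if p = k then l else if p < k then half p + 1 else 1)"

lemma gate_bounds:
  "1 \<le> p \<Longrightarrow> p \<le> m \<Longrightarrow> 1 \<le> l \<Longrightarrow> l \<le> n k \<Longrightarrow> 1 \<le> gate p k l \<and> gate p k l \<le> n p"
  using cycle_length_eq[of p] by (auto simp: gate_def)

lemma chain_dist_via_gate:
  "chain_dist (p, j) (k, l) = cyc_dist (n p) j (gate p k l) + chain_dist (p, gate p k l) (k, l)"
  by (auto simp: gate_def cyc_dist_commute)

lemma chain_dist_cut_vertex:
  assumes "1 \<le> q" "Suc q \<le> m" "1 \<le> k" "k \<le> m"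
  shows "chain_dist (q, half q + 1) (k, l) = chain_dist (Suc q, 1) (k, l)"
proof -
  have "cyc_dist (n q) 1 (half q + 1) = half q" "cyc_dist (n (Suc q)) 1 (half (Suc q) + 1) = half (Suc q)"
    using cyc_dist_entry_exit assms by auto
  moreover consider "k = Suc q" | "Suc q < k" | "k = q" | "k < q" by linarith
  ultimately show ?thesis
    by cases (simp_all add: sum.atLeast_Suc_lessThan sum.atLeastLessThan_Suc cyc_dist_commute)
qed

lemma chain_dist_ecc_vx_left:
  assumes "1 \<le> p" "p \<le> m" "1 \<le> j" "j \<le> n p" "1 \<le> k" "k \<le> m"
  shows "chain_dist (ecc_vx n p j) (k, l) = chain_dist (p, j) (k, l)"
proof (cases "2 \<le> p \<and> j = 1")
  case True
  then show ?thesis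
    using ecc_vx_cut_vertex chain_dist_cut_vertex[of "p - 1" k l] assms by auto
qed (auto simp: ecc_vx_def)

lemma chain_dist_ecc_vx:
  assumes "1 \<le> p" "p \<le> m" "1 \<le> j" "j \<le> n p" "1 \<le> k" "k \<le> m" "1 \<le> l" "l \<le> n k"
  shows "chain_dist (ecc_vx n p j) (ecc_vx n k l) = chain_dist (p, j) (k, l)"
proof -
  obtain k' l' where kl': "ecc_vx n k l = (k', l')" by fastforce
  then have "(k', l') \<in> V" using ecc_vx_mem_V[OF assms(5-8)] by simp
  then have "1 \<le> k'" "k' \<le> m" by (auto simp: mem_V_iff)
  then have "chain_dist (ecc_vx n p j) (k', l') = chain_dist (k, l) (p, j)"
    using chain_dist_ecc_vx_left assms kl' by (metis chain_dist_commute)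
  then show ?thesis using kl' chain_dist_commute by metis
qed

lemma ecc_adj_iff:
  "adj x y \<longleftrightarrow> (\<exists>p q. 1 \<le> p \<and> p \<le> m \<and> 1 \<le> q \<and> q \<le> n p \<and>
      {x, y} = {ecc_vx n p q, ecc_vx n p (cyc_succ (n p) q)})"
  unfolding ecc_adj_def doubleton_eq_iff by (simp add: cyc_succ_eq_mod cong: conj_cong) blast

lemma ecc_adj_cycle_neighbours:
  assumes "1 \<le> p" "p \<le> m" "1 \<le> q" "q \<le> n p"
  shows "adj (ecc_vx n p q) (ecc_vx n p (cyc_succ (n p) q))"
    and "adj (ecc_vx n p q) (ecc_vx n p (cyc_pred (n p) q))"
proof -
  show "adj (ecc_vx n p q) (ecc_vx n p (cyc_succ (n p) q))"
    unfolding ecc_adj_iff using assms by blast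
  have "1 \<le> cyc_pred (n p) q" "cyc_pred (n p) q \<le> n p" "cyc_succ (n p) (cyc_pred (n p) q) = q"
    using cyc_pred_bounds cyc_succ_eq_iff assms by blast+
  then show "adj (ecc_vx n p q) (ecc_vx n p (cyc_pred (n p) q))"
    unfolding ecc_adj_iff using assms(1,2)
    by (intro exI[of _ p] exI[of _ "cyc_pred (n p) q"]) (auto simp: doubleton_eq_iff)
qed

lemma ecc_adj_in_V:
  assumes "adj x y"
  shows "x \<in> V \<and> y \<in> V"
proof -
  obtain p q where pq: "1 \<le> p" "p \<le> m" "1 \<le> q" "q \<le> n p"
      "{x, y} = {ecc_vx n p q, ecc_vx n p (cyc_succ (n p) q)}"
    using assms unfolding ecc_adj_iff by blast
  moreover have "1 \<le> cyc_succ (n p) q" "cyc_succ (n p) q \<le> n p" using cyc_succ_bounds pq by blast+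
  ultimately show ?thesis using ecc_vx_mem_V by (auto simp: doubleton_eq_iff)
qed

lemma chain_dist_succ_le:
  assumes "1 \<le> p" "p \<le> m" "1 \<le> q" "q \<le> n p" "1 \<le> k" "k \<le> m" "1 \<le> l" "l \<le> n k"
  shows "chain_dist (p, cyc_succ (n p) q) (k, l) \<le> chain_dist (p, q) (k, l) + 1"
    and "chain_dist (p, q) (k, l) \<le> chain_dist (p, cyc_succ (n p) q) (k, l) + 1"
proof -
  have "1 \<le> gate p k l" "gate p k l \<le> n p"
    using gate_bounds assms(1,2,7,8) by blast+
  then show "chain_dist (p, cyc_succ (n p) q) (k, l) \<le> chain_dist (p, q) (k, l) + 1"
    and "chain_dist (p, q) (k, l) \<le> chain_dist (p, cyc_succ (n p) q) (k, l) + 1"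
    using cyc_dist_succ_le[of q "n p" "gate p k l"] assms
    by (subst (1 2) chain_dist_via_gate; simp)+
qed

lemma chain_dist_adj_le:
  assumes "adj x y" "z \<in> V"
  shows "chain_dist x z \<le> chain_dist y z + 1"
proof -
  obtain k l where z: "z = (k, l)" by fastforce
  then have kl: "1 \<le> k" "k \<le> m" "1 \<le> l" "l \<le> n k" "z = ecc_vx n k l"
    using assms(2) ecc_vx_canonical by (auto simp: mem_V_iff)
  obtain p q where pq: "1 \<le> p" "p \<le> m" "1 \<le> q" "q \<le> n p"
      "{x, y} = {ecc_vx n p q, ecc_vx n p (cyc_succ (n p) q)}"
    using assms(1) unfolding ecc_adj_iff by blast
  have "1 \<le> cyc_succ (n p) q" "cyc_succ (n p) q \<le> n p" using cyc_succ_bounds pq by blast+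
  then show ?thesis
    using pq(5) chain_dist_succ_le[OF pq(1-4) kl(1-4)]
      chain_dist_ecc_vx[OF pq(1-4) kl(1-4)] chain_dist_ecc_vx[OF pq(1,2) _ _ kl(1-4)] kl(5)
    unfolding doubleton_eq_iff by auto
qed

lemma chain_dist_eq_0_iff:
  assumes "x \<in> V" "z \<in> V"
  shows "chain_dist x z = 0 \<longleftrightarrow> x = z"
proof -
  obtain p j k l where xz: "x = (p, j)" "z = (k, l)" by fastforce
  then have "1 \<le> p \<and> p \<le> m \<and> 1 \<le> j \<and> j \<le> n p \<and> \<not> (2 \<le> p \<and> j = 1)"
    "1 \<le> k \<and> k \<le> m \<and> 1 \<le> l \<and> l \<le> n k \<and> \<not> (2 \<le> k \<and> l = 1)"
    using assms by (auto simp: mem_V_iff)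
  then show ?thesis
    using xz cyc_dist_eq_0_iff[of j "n p" l] cyc_dist_eq_0_iff[of 1 "n k" l]
      cyc_dist_eq_0_iff[of 1 "n p" j]
    by auto
qed

text \<open>A vertex off the gate towards \<open>z\<close> can step closer to \<open>z\<close> inside its cycle; a canonical
  vertex sitting on its gate is a cut vertex, whose other name lies off the gate.\<close>

lemma exists_name_off_gate:
  assumes "(p, j) \<in> V" "(k, l) \<in> V" "chain_dist (p, j) (k, l) \<noteq> 0"
  obtains p' j' where "1 \<le> p'" "p' \<le> m" "1 \<le> j'" "j' \<le> n p'" "ecc_vx n p' j' = (p, j)"
    "chain_dist (p', j') (k, l) = chain_dist (p, j) (k, l)" "j' \<noteq> gate p' k l"
proof -
  have pj: "1 \<le> p" "p \<le> m" "1 \<le> j" "j \<le> n p" "\<not> (2 \<le> p \<and> j = 1)"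
    and kl: "1 \<le> k" "k \<le> m" "1 \<le> l" "l \<le> n k"
    using assms(1,2) by (auto simp: mem_V_iff)
  consider "j \<noteq> gate p k l" | "j = gate p k l" "p < k"
    using assms(3) pj(5) kl(1) by (cases "j = gate p k l") (auto simp: gate_def split: if_splits)
  then show ?thesis
  proof cases
    case 1
    then show ?thesis using that pj assms(1) ecc_vx_canonical by blast
  next
    case 2
    then have j: "j = half p + 1" and "Suc p \<le> m" using kl by (auto simp: gate_def)
    then have "1 \<le> n (Suc p)" "2 \<le> half (Suc p)" using cycle_length_eq[of "Suc p"] by auto
    have "ecc_vx n (Suc p) 1 = (p, j)" using j ecc_vx_cut_vertex[of "Suc p"] pj(1) by simp
    moreover have same_dist: "chain_dist (Suc p, 1) (k, l) = chain_dist (p, j) (k, l)"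
      using j chain_dist_cut_vertex[of p k l] pj kl 2 by simp
    moreover have "1 \<noteq> gate (Suc p) k l"
      using same_dist assms(3) \<open>2 \<le> half (Suc p)\<close> 2 by (auto simp: gate_def)
    ultimately show ?thesis
      using \<open>Suc p \<le> m\<close> \<open>1 \<le> n (Suc p)\<close> by (intro that[of "Suc p" 1]) simp_all
  qed
qed

lemma chain_dist_descent:
  assumes "x \<in> V" "z \<in> V" "chain_dist x z \<noteq> 0"
  shows "\<exists>y. adj x y \<and> chain_dist y z < chain_dist x z"
proof -
  obtain p j k l where xz: "x = (p, j)" "z = (k, l)" by fastforce
  then have kl: "1 \<le> k" "k \<le> m" "1 \<le> l" "l \<le> n k" "z = ecc_vx n k l"
    using assms(2) ecc_vx_canonical by (auto simp: mem_V_iff)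
  obtain p' j' where p'j': "1 \<le> p'" "p' \<le> m" "1 \<le> j'" "j' \<le> n p'" "ecc_vx n p' j' = x"
      "chain_dist (p', j') z = chain_dist x z" "j' \<noteq> gate p' k l"
    using exists_name_off_gate assms xz by metis
  have "1 \<le> gate p' k l" "gate p' k l \<le> n p'"
    using gate_bounds p'j'(1,2) kl(3,4) by blast+
  then obtain j'' where j'': "j'' = cyc_succ (n p') j' \<or> j'' = cyc_pred (n p') j'"
      "cyc_dist (n p') j'' (gate p' k l) < cyc_dist (n p') j' (gate p' k l)"
    using cyc_dist_closer_neighbour p'j'(3,4,7) by blast
  then have "1 \<le> j''" "j'' \<le> n p'" using cyc_succ_bounds cyc_pred_bounds p'j' by blast+
  then have "chain_dist (ecc_vx n p' j'') z = chain_dist (p', j'') (k, l)"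
    using chain_dist_ecc_vx p'j' kl by simp
  also have "\<dots> < chain_dist x z"
    using j''(2) p'j'(6) xz chain_dist_via_gate[of p' j''] chain_dist_via_gate[of p' j'] by simp
  finally show ?thesis
    using j''(1) ecc_adj_cycle_neighbours[OF p'j'(1-4)] p'j'(5) by blast
qed

lemma gdist_eq_chain_dist: "x \<in> V \<Longrightarrow> z \<in> V \<Longrightarrow> gdist adj x z = chain_dist x z"
  by (rule gdist_eqI[where V = V])
    (use ecc_adj_in_V chain_dist_adj_le chain_dist_eq_0_iff chain_dist_descent in auto)

lemma gdist_commute: "x \<in> V \<Longrightarrow> z \<in> V \<Longrightarrow> gdist adj x z = gdist adj z x"
  using gdist_eq_chain_dist chain_dist_commute by simp

lemma chain_dist_le_sum_half:
  assumes "1 \<le> p" "p \<le> m" "1 \<le> k" "k \<le> m"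
  shows "chain_dist (p, j) (k, l) \<le> (\<Sum>q=1..m. half q)"
proof -
  have cyc_le: "cyc_dist (n q) a b \<le> half q" for q a b
    using cyc_dist_le_half by (simp add: half_def)
  have "chain_dist (p, j) (k, l) \<le> (\<Sum>q=1..m. half q)" if "1 \<le> p" "p < k" "k \<le> m" for p j k l
  proof -
    have "chain_dist (p, j) (k, l) \<le> half p + (\<Sum>q=Suc p..<k. half q) + half k"
      using that cyc_le[of p j "half p + 1"] cyc_le[of k 1 l] by simp
    also have "\<dots> \<le> (\<Sum>q=1..m. half q)"
      using sum_split_at_two[of p k m half] that by simp
    finally show ?thesis .
  qed
  moreover have "chain_dist (p, j) (p, l) \<le> (\<Sum>q=1..m. half q)"
    using cyc_le[of p j l] member_le_sum[of p "{1..m}" half] assms by simp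
  ultimately show ?thesis
    using assms chain_dist_commute by (metis linorder_cases)
qed

lemma gdiam_eq_sum_half: "gdiam V adj = (\<Sum>q=1..m. half q)"
proof -
  let ?D = "{gdist adj u v | u v. u \<in> V \<and> v \<in> V}"
  have bounded: "d \<le> (\<Sum>q=1..m. half q)" if "d \<in> ?D" for d
  proof -
    obtain p j k l where "d = gdist adj (p, j) (k, l)" "(p, j) \<in> V" "(k, l) \<in> V"
      using \<open>d \<in> ?D\<close> by auto
    then show ?thesis using gdist_eq_chain_dist chain_dist_le_sum_half by (simp add: mem_V_iff)
  qed
  then have "?D \<subseteq> {..(\<Sum>q=1..m. half q)}"
    by (simp only: subset_iff atMost_iff) blast
  then have "finite ?D"
    using finite_subset by blast
  have far_ends: "(1, 1) \<in> V" "(m, half m + 1) \<in> V"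
    using cycle_length_eq[of 1] cycle_length_eq[of m] two_le_m by (auto simp: mem_V_iff)
  then have diam_attained: "gdist adj (1, 1) (m, half m + 1) = (\<Sum>q=1..m. half q)"
    using gdist_eq_chain_dist cyc_dist_entry_exit two_le_m sum_split_at_two[of 1 m m half]
    by (simp add: cyc_dist_commute)
  have "(\<Sum>q=1..m. half q) \<in> ?D" unfolding diam_attained[symmetric] using far_ends by blast
  then show ?thesis
    unfolding gdiam_def using \<open>finite ?D\<close> bounded by (rule Max_eqI[rotated 2])
qed

section \<open>Maximally distant vertices\<close>

lemma ecc_adj_V2_cases:
  assumes "(i, j) \<in> V - V1" "adj (i, j) w"
  shows "w = ecc_vx n i (cyc_succ (n i) j) \<or> w = ecc_vx n i (cyc_pred (n i) j)"
proof -
  obtain p q where pq: "1 \<le> p" "p \<le> m" "1 \<le> q" "q \<le> n p"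
      "{(i, j), w} = {ecc_vx n p q, ecc_vx n p (cyc_succ (n p) q)}"
    using assms(2) unfolding ecc_adj_iff by blast
  have canonical: "ecc_vx n p r = (p, r)" if "ecc_vx n p r = (i, j)" for r
  proof -
    have "\<not> (2 \<le> p \<and> r = 1)" using that assms(1) pq(2) unfolding ecc_V1_def by force
    then show ?thesis by (auto simp: ecc_vx_def)
  qed
  have "1 \<le> j" "j \<le> n i" using assms(1) by (auto simp: mem_V_iff)
  then show ?thesis
    using pq(5) canonical cyc_succ_eq_iff[of q "n p" j] pq(1-4) unfolding doubleton_eq_iff by auto
qed

lemma max_distant_iff_neighbours:
  assumes x: "(i, j) \<in> V - V1" and y: "(k, l) \<in> V"
  shows "max_distant adj (i, j) (k, l) \<longleftrightarrow>
    chain_dist (i, cyc_succ (n i) j) (k, l) \<le> chain_dist (i, j) (k, l)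
    \<and> chain_dist (i, cyc_pred (n i) j) (k, l) \<le> chain_dist (i, j) (k, l)"
proof -
  have ij: "1 \<le> i" "i \<le> m" "1 \<le> j" "j \<le> n i" "ecc_vx n i j = (i, j)"
    using x ecc_vx_canonical by (auto simp: mem_V_iff)
  have kl: "1 \<le> k" "k \<le> m" "1 \<le> l" "l \<le> n k" "ecc_vx n k l = (k, l)"
    using y ecc_vx_canonical by (auto simp: mem_V_iff)
  have neighbours:
    "adj (i, j) w \<longleftrightarrow> w = ecc_vx n i (cyc_succ (n i) j) \<or> w = ecc_vx n i (cyc_pred (n i) j)" for w
    using ecc_adj_V2_cases[OF x] ecc_adj_cycle_neighbours[OF ij(1-4)] ij(5) by metis
  have dist_to_y: "gdist adj (k, l) (ecc_vx n i r) = chain_dist (i, r) (k, l)"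
    if "1 \<le> r" "r \<le> n i" for r
    using gdist_eq_chain_dist[OF y ecc_vx_mem_V] chain_dist_ecc_vx[of i r k l]
      chain_dist_commute ij kl that by metis
  have "1 \<le> cyc_succ (n i) j" "cyc_succ (n i) j \<le> n i" "1 \<le> cyc_pred (n i) j" "cyc_pred (n i) j \<le> n i"
    using cyc_succ_bounds cyc_pred_bounds ij by blast+
  moreover have "gdist adj (i, j) (k, l) = chain_dist (i, j) (k, l)"
    using gdist_eq_chain_dist x y by blast
  moreover have "max_distant adj (i, j) (k, l) \<longleftrightarrow> (\<forall>w \<in> {ecc_vx n i (cyc_succ (n i) j),
      ecc_vx n i (cyc_pred (n i) j)}. gdist adj (k, l) w \<le> gdist adj (i, j) (k, l))"
    unfolding max_distant_def neighbours by blast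
  ultimately show ?thesis using dist_to_y by (simp del: chain_dist.simps)
qed

lemma max_distant_iff_antipodal_gate:
  assumes x: "(i, j) \<in> V - V1" and y: "(k, l) \<in> V"
  shows "max_distant adj (i, j) (k, l) \<longleftrightarrow> cyc_dist (n i) j (gate i k l) = half i"
proof -
  have ij: "1 \<le> i" "i \<le> m" "1 \<le> j" "j \<le> n i" using x by (auto simp: mem_V_iff)
  have "1 \<le> gate i k l" "gate i k l \<le> n i"
    using gate_bounds ij(1,2) y by (auto simp: mem_V_iff)
  moreover have "chain_dist (i, a) (k, l) \<le> chain_dist (i, j) (k, l)
      \<longleftrightarrow> cyc_dist (n i) a (gate i k l) \<le> cyc_dist (n i) j (gate i k l)" for a
    by (simp only: chain_dist_via_gate[of i a] chain_dist_via_gate[of i j]) simp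
  ultimately show ?thesis
    unfolding max_distant_iff_neighbours[OF assms]
    using cyc_dist_local_max_iff[of j "half i" "gate i k l"] cycle_length_eq[OF ij(1,2)] ij(3,4)
    by simp
qed

lemma mutually_max_distant_same_cycle_iff:
  assumes x: "(i, j) \<in> V - V1" and y: "(i, l) \<in> V - V1"
  shows "mutually_max_distant adj (i, j) (i, l) \<longleftrightarrow> gdist adj (i, j) (i, l) = n i div 2"
  using max_distant_iff_antipodal_gate[OF x] max_distant_iff_antipodal_gate[OF y]
    gdist_eq_chain_dist[of "(i, j)" "(i, l)"] x y
  by (simp add: mutually_max_distant_def gate_def half_def cyc_dist_commute)

lemma mutually_max_distant_different_cycles_iff:
  assumes x: "(i, j) \<in> V - V1" and y: "(k, l) \<in> V - V1" and "i < k"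
  shows "mutually_max_distant adj (i, j) (k, l) \<longleftrightarrow> gdist adj (i, j) (k, l) = gdiam V adj"
proof -
  have ij: "1 \<le> i" "i \<le> m" "1 \<le> j" "j \<le> n i" "\<not> (2 \<le> i \<and> j = 1)"
    and kl: "1 \<le> k" "k \<le> m" "1 \<le> l" "l \<le> n k"
    using x y by (auto simp: mem_V_iff)
  have mutual_iff: "mutually_max_distant adj (i, j) (k, l)
      \<longleftrightarrow> cyc_dist (n i) j (half i + 1) = half i \<and> cyc_dist (n k) l 1 = half k"
    using max_distant_iff_antipodal_gate[OF x DiffD1[OF y]]
      max_distant_iff_antipodal_gate[OF y DiffD1[OF x]] \<open>i < k\<close>
    by (simp add: mutually_max_distant_def gate_def)
  have gdist_eq: "gdist adj (i, j) (k, l)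
      = cyc_dist (n i) j (half i + 1) + (\<Sum>q=Suc i..<k. half q) + cyc_dist (n k) l 1"
    using gdist_eq_chain_dist x y \<open>i < k\<close> by (simp add: cyc_dist_commute)
  have diam_eq: "gdiam V adj = (\<Sum>q=1..<i. half q) + half i + (\<Sum>q=Suc i..<k. half q) + half k
      + (\<Sum>q=Suc k..m. half q)"
    using gdiam_eq_sum_half sum_split_at_two[of i k m half] ij kl \<open>i < k\<close> by simp
  show ?thesis
  proof
    assume "mutually_max_distant adj (i, j) (k, l)"
    then have "j = 1" "l = half k + 1"
        "cyc_dist (n i) j (half i + 1) = half i" "cyc_dist (n k) l 1 = half k"
      using mutual_iff cyc_dist_exit_eq_half_iff[OF ij(1-4)] cyc_dist_entry_eq_half_iff[OF kl] by auto
    moreover have "i = 1" using ij \<open>j = 1\<close> by simp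
    moreover have "k = m" using cut_vertex_mem_V1 kl y \<open>l = half k + 1\<close> by fastforce
    ultimately show "gdist adj (i, j) (k, l) = gdiam V adj"
      using gdist_eq diam_eq by simp
  next
    assume "gdist adj (i, j) (k, l) = gdiam V adj"
    moreover have "cyc_dist (n i) j (half i + 1) \<le> half i" "cyc_dist (n k) l 1 \<le> half k"
      using cyc_dist_le_half by (simp_all add: half_def)
    ultimately show "mutually_max_distant adj (i, j) (k, l)"
      unfolding mutual_iff using gdist_eq diam_eq by linarith
  qed
qed

end

theorem theorem3p3:
  fixes n :: "nat \<Rightarrow> nat" and m i j k l :: nat
  assumes "2 \<le> m"
    and "\<forall>p\<in>{1..m}. even (n p) \<and> 4 \<le> n p"
    and "1 \<le> i" "i \<le> m" "1 \<le> j" "j \<le> n i"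
    and "1 \<le> k" "k \<le> m" "1 \<le> l" "l \<le> n k"
    and "ecc_vx n i j \<notin> ecc_V1 n m" and "ecc_vx n k l \<notin> ecc_V1 n m"
    and "ecc_vx n i j \<noteq> ecc_vx n k l"
  shows "(i = k \<longrightarrow>
            (mutually_max_distant (ecc_adj n m) (ecc_vx n i j) (ecc_vx n k l)
             \<longleftrightarrow> gdist (ecc_adj n m) (ecc_vx n i j) (ecc_vx n k l) = n i div 2))
       \<and> (i \<noteq> k \<longrightarrow>
            (mutually_max_distant (ecc_adj n m) (ecc_vx n i j) (ecc_vx n k l)
             \<longleftrightarrow> gdist (ecc_adj n m) (ecc_vx n i j) (ecc_vx n k l)
                 = gdiam (ecc_V n m) (ecc_adj n m)))"
proof -
  interpret even_chain_cycle n m using assms(1,2) by unfold_locales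
  have x: "ecc_vx n i j = (i, j)" "(i, j) \<in> V - V1" using ecc_vx_V2 assms by blast+
  have y: "ecc_vx n k l = (k, l)" "(k, l) \<in> V - V1" using ecc_vx_V2 assms by blast+
  have "mutually_max_distant adj (i, j) (k, l) \<longleftrightarrow> gdist adj (i, j) (k, l) = gdiam V adj"
    if "i \<noteq> k"
  proof (cases "i < k")
    case True
    then show ?thesis using mutually_max_distant_different_cycles_iff x y by blast
  next
    case False
    then have "k < i" using that by simp
    then show ?thesis
      using mutually_max_distant_different_cycles_iff[OF y(2) x(2)]
        mutually_max_distant_commute[of adj "(i, j)"] gdist_commute[of "(i, j)" "(k, l)"] x(2) y(2)
      by simp
  qed
  then show ?thesis
    using mutually_max_distant_same_cycle_iff x y unfolding x(1) y(1) by auto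
qed

end
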